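(* Let $\Gamma=(V,E)$ be a simple graph of order $n$ and minimum degree $\delta$, and let $\mu_*$ be the Laplacian spectral radius of $\Gamma$. Then the global offensive alliance number of $\Gamma$ satisfies $$\gamma_{a_o}(\Gamma)\ge \left\lceil\frac{n}{\mu_*}\left\lceil\frac{\delta +1}{2}\right\rceil\right\rceil$$ and the global strong offensive alliance number of $\Gamma$ satisfies $$\gamma_{\hat{a}_o}(\Gamma)\ge \left\lceil\frac{n}{\mu_*}\left(\left\lceil\frac{\delta }{2}\right\rceil+1\right)\right\rceil.$$
   Context: For $S\subseteq V$ and $v\in V$, $N_S(v)=\{u\in S: u\sim v\}$ and $N_{V\setminus S}(v)=\{u\in V\setminus S: u\sim v\}$. A nonempty set $S\subseteq V$ is a global offensive alliance if $|N_S(v)|\ge |N_{V\setminus S}(v)|+1$ for every $v\in V\setminus S$, and a global strong offensive alliance if $|N_S(v)|\ge |N_{V\setminus S}(v)|+2$ for every $v\in V\setminus S$. $\gamma_{a_o}(\Gamma)$ (resp. $\gamma_{\hat a_o}(\Gamma)$) is the minimum cardinality of a global offensive (resp. global strong offensive) alliance. The Laplacian spectral radius is the largest eigenvalue of the Laplacian matrix of $\Gamma$. *)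

theory Defs
  imports Complex_Main
begin

definition simple_graph :: "'a set \<Rightarrow> ('a \<Rightarrow> 'a \<Rightarrow> bool) \<Rightarrow> bool" where
  "simple_graph V E \<longleftrightarrow> finite V \<and> (\<forall>u v. E u v \<longrightarrow> E v u) \<and> (\<forall>v. \<not> E v v)
     \<and> (\<forall>u v. E u v \<longrightarrow> u \<in> V \<and> v \<in> V)"

definition nbhd_in :: "('a \<Rightarrow> 'a \<Rightarrow> bool) \<Rightarrow> 'a set \<Rightarrow> 'a \<Rightarrow> 'a set" where
  "nbhd_in E S v = {u \<in> S. E u v}"

definition degree :: "'a set \<Rightarrow> ('a \<Rightarrow> 'a \<Rightarrow> bool) \<Rightarrow> 'a \<Rightarrow> nat" where
  "degree V E v = card (nbhd_in E V v)"

definition min_degree :: "'a set \<Rightarrow> ('a \<Rightarrow> 'a \<Rightarrow> bool) \<Rightarrow> nat" where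
  "min_degree V E = Min (degree V E ` V)"

definition global_offensive_alliance :: "'a set \<Rightarrow> ('a \<Rightarrow> 'a \<Rightarrow> bool) \<Rightarrow> 'a set \<Rightarrow> bool" where
  "global_offensive_alliance V E S \<longleftrightarrow> S \<noteq> {} \<and> S \<subseteq> V \<and>
     (\<forall>v \<in> V - S. card (nbhd_in E S v) \<ge> card (nbhd_in E (V - S) v) + 1)"

definition global_strong_offensive_alliance :: "'a set \<Rightarrow> ('a \<Rightarrow> 'a \<Rightarrow> bool) \<Rightarrow> 'a set \<Rightarrow> bool" where
  "global_strong_offensive_alliance V E S \<longleftrightarrow> S \<noteq> {} \<and> S \<subseteq> V \<and>
     (\<forall>v \<in> V - S. card (nbhd_in E S v) \<ge> card (nbhd_in E (V - S) v) + 2)"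

definition offensive_alliance_number :: "'a set \<Rightarrow> ('a \<Rightarrow> 'a \<Rightarrow> bool) \<Rightarrow> nat" where
  "offensive_alliance_number V E = Min (card ` {S. global_offensive_alliance V E S})"

definition strong_offensive_alliance_number :: "'a set \<Rightarrow> ('a \<Rightarrow> 'a \<Rightarrow> bool) \<Rightarrow> nat" where
  "strong_offensive_alliance_number V E = Min (card ` {S. global_strong_offensive_alliance V E S})"

definition laplacian :: "'a set \<Rightarrow> ('a \<Rightarrow> 'a \<Rightarrow> bool) \<Rightarrow> 'a \<Rightarrow> 'a \<Rightarrow> real" where
  "laplacian V E u v = (if u = v then real (degree V E u) else if E u v then -1 else 0)"

definition is_eigenvalue_on :: "'a set \<Rightarrow> ('a \<Rightarrow> 'a \<Rightarrow> real) \<Rightarrow> real \<Rightarrow> bool" where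
  "is_eigenvalue_on V M mu \<longleftrightarrow> (\<exists>x :: 'a \<Rightarrow> real. (\<exists>v \<in> V. x v \<noteq> 0) \<and>
      (\<forall>u \<in> V. (\<Sum>v \<in> V. M u v * x v) = mu * x u))"

definition laplacian_spectral_radius :: "'a set \<Rightarrow> ('a \<Rightarrow> 'a \<Rightarrow> bool) \<Rightarrow> real" where
  "laplacian_spectral_radius V E = Max {mu. is_eigenvalue_on V (laplacian V E) mu}"

end

theory Submission
  imports Defs "HOL-Analysis.Analysis" "Jordan_Normal_Form.Char_Poly"
begin

text \<open>
  The Laplacian L is symmetric, so a maximiser of the Rayleigh quotient on the unit sphere is an
  eigenvector, and the spectral radius \<mu> bounds the quadratic form: x^T L x \<le> \<mu> |x|^2.
  Let S be an alliance with complement T, s = |S| and t = |T|. The vector equal to t on S and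
  to -s on T has x^T L x = n^2 e(S,T), where e(S,T) counts the edges between S and T, and
  |x|^2 = s t n; hence n e(S,T) \<le> \<mu> s t.
  Every vertex of T has at least \<lceil>(\<delta> + k)/2\<rceil> neighbours in S, with k = 1 for offensive
  and k = 2 for strong offensive alliances (note \<lceil>\<delta>/2\<rceil> + 1 = \<lceil>(\<delta> + 2)/2\<rceil>), so
  e(S,T) \<ge> t \<lceil>(\<delta> + k)/2\<rceil> and s \<ge> n \<lceil>(\<delta> + k)/2\<rceil> / \<mu>. When T is empty, the vector
  e_u - e_v of an edge uv shows \<mu> \<ge> \<delta> + 1, which suffices instead.
\<close>

definition quad_form :: "'a set \<Rightarrow> ('a \<Rightarrow> 'a \<Rightarrow> real) \<Rightarrow> ('a \<Rightarrow> real) \<Rightarrow> real" where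
  "quad_form V M x = (\<Sum>u\<in>V. \<Sum>v\<in>V. M u v * x u * x v)"

definition sq_norm_on :: "'a set \<Rightarrow> ('a \<Rightarrow> real) \<Rightarrow> real" where
  "sq_norm_on V x = (\<Sum>v\<in>V. (x v)\<^sup>2)"

lemma quad_form_eq_sum_apply: "quad_form V M x = (\<Sum>u\<in>V. x u * (\<Sum>v\<in>V. M u v * x v))"
  unfolding quad_form_def by (simp add: sum_distrib_left algebra_simps)

lemma quad_form_scale: "quad_form V M (\<lambda>v. c * x v) = c\<^sup>2 * quad_form V M x"
  unfolding quad_form_def by (simp add: sum_distrib_left power2_eq_square algebra_simps)

lemma sq_norm_on_scale: "sq_norm_on V (\<lambda>v. c * x v) = c\<^sup>2 * sq_norm_on V x"
  unfolding sq_norm_on_def by (simp add: sum_distrib_left power_mult_distrib)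

lemma quad_form_add_scaled:
  assumes "\<And>u v. M u v = M v u"
  shows "quad_form V M (\<lambda>v. x v + t * y v)
    = quad_form V M x + 2 * t * (\<Sum>u\<in>V. \<Sum>v\<in>V. M u v * x u * y v) + t\<^sup>2 * quad_form V M y"
proof -
  have swap: "(\<Sum>u\<in>V. \<Sum>v\<in>V. M u v * y u * x v) = (\<Sum>u\<in>V. \<Sum>v\<in>V. M u v * x u * y v)"
    by (subst sum.swap) (simp add: assms mult.commute mult.left_commute)
  have "quad_form V M (\<lambda>v. x v + t * y v)
      = quad_form V M x + t * (\<Sum>u\<in>V. \<Sum>v\<in>V. M u v * x u * y v)
        + t * (\<Sum>u\<in>V. \<Sum>v\<in>V. M u v * y u * x v) + t\<^sup>2 * quad_form V M y"
    unfolding quad_form_def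
    by (simp add: algebra_simps power2_eq_square sum.distrib sum_distrib_left)
  then show ?thesis using swap by simp
qed

lemma sq_norm_on_add_scaled:
  "sq_norm_on V (\<lambda>v. x v + t * y v) = sq_norm_on V x + 2 * t * (\<Sum>v\<in>V. x v * y v) + t\<^sup>2 * sq_norm_on V y"
  unfolding sq_norm_on_def by (simp add: power2_eq_square algebra_simps sum.distrib sum_distrib_left)

lemma sq_norm_on_nonneg: "0 \<le> sq_norm_on V x"
  unfolding sq_norm_on_def by (simp add: sum_nonneg)

lemma sq_norm_on_eq_0_iff: "finite V \<Longrightarrow> sq_norm_on V x = 0 \<longleftrightarrow> (\<forall>v\<in>V. x v = 0)"
  unfolding sq_norm_on_def by (simp add: sum_nonneg_eq_0_iff)

lemma quad_form_attains_max_on_unit_sphere: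
  assumes fin: "finite V" and ne: "V \<noteq> {}"
  obtains x0 where "sq_norm_on V x0 = 1"
    and "\<And>x. sq_norm_on V x = 1 \<Longrightarrow> quad_form V M x \<le> quad_form V M x0"
proof -
  let ?X = "product_topology (\<lambda>_. euclideanreal) (UNIV :: 'a set)"
  define K where "K = PiE UNIV (\<lambda>i. if i \<in> V then {-1..1::real} else {0})"
  define T where "T = {x \<in> topspace ?X. sq_norm_on V x \<in> {1}} \<inter> K"
  have "compactin ?X K"
    unfolding K_def by (subst compactin_PiE) auto
  moreover have "continuous_map ?X euclideanreal (sq_norm_on V)"
    unfolding sq_norm_on_def power2_eq_square
    by (intro continuous_map_sum continuous_map_real_mult fin
        continuous_map_product_projection[where X="\<lambda>_. euclideanreal", simplified]) auto
  ultimately have "compactin ?X T"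
    unfolding T_def by (intro closed_Int_compactin closedin_continuous_map_preimage) auto
  moreover have "continuous_map ?X euclideanreal (quad_form V M)"
    unfolding quad_form_def
    by (intro continuous_map_sum continuous_map_real_mult continuous_map_const[THEN iffD2] fin
        continuous_map_product_projection[where X="\<lambda>_. euclideanreal", simplified]) auto
  ultimately have cpt: "compact (quad_form V M ` T)"
    using image_compactin by fastforce
  have restrict_in_T: "(\<lambda>v. if v \<in> V then x v else 0) \<in> T" if "sq_norm_on V x = 1" for x
  proof -
    have "\<bar>x v\<bar> \<le> 1" if "v \<in> V" for v
    proof -
      have "(x v)\<^sup>2 \<le> sq_norm_on V x"
        unfolding sq_norm_on_def by (rule member_le_sum[OF \<open>v \<in> V\<close>]) (auto simp: fin)
      then show ?thesis using \<open>sq_norm_on V x = 1\<close> by (simp add: abs_square_le_1)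
    qed
    then show ?thesis using that by (auto simp: T_def K_def sq_norm_on_def abs_le_iff)
  qed
  obtain v0 where "v0 \<in> V" using ne by auto
  then have "sq_norm_on V (\<lambda>v. if v = v0 then 1 else 0) = 1"
    using fin unfolding sq_norm_on_def by (simp add: if_distrib[of "\<lambda>y. y\<^sup>2"] cong: if_cong)
  then have "T \<noteq> {}" using restrict_in_T by blast
  then obtain x0 where x0: "x0 \<in> T" "\<And>y. y \<in> T \<Longrightarrow> quad_form V M y \<le> quad_form V M x0"
    using cpt compact_attains_sup[of "quad_form V M ` T"] by blast
  show ?thesis
  proof
    show "sq_norm_on V x0 = 1" using x0 by (auto simp: T_def)
    fix x assume "sq_norm_on V x = 1"
    then have "quad_form V M (\<lambda>v. if v \<in> V then x v else 0) \<le> quad_form V M x0"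
      using x0(2) restrict_in_T by blast
    then show "quad_form V M x \<le> quad_form V M x0" by (simp add: quad_form_def)
  qed
qed

lemma rayleigh_bound_of_unit_sphere_bound:
  assumes fin: "finite V" and bound: "\<And>x. sq_norm_on V x = 1 \<Longrightarrow> quad_form V M x \<le> lam"
  shows "quad_form V M x \<le> lam * sq_norm_on V x"
proof (cases "sq_norm_on V x = 0")
  case True
  then have "\<forall>v\<in>V. x v = 0" using fin sq_norm_on_eq_0_iff by blast
  then show ?thesis using True by (simp add: quad_form_def)
next
  case False
  define r where "r = sqrt (sq_norm_on V x)"
  have r: "r > 0" "r\<^sup>2 = sq_norm_on V x"
    using False sq_norm_on_nonneg[of V x] by (auto simp: r_def)
  have "sq_norm_on V (\<lambda>v. (1 / r) * x v) = 1"
    unfolding sq_norm_on_scale using r False by (simp add: power_divide)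
  from bound[OF this] have "quad_form V M x / r\<^sup>2 \<le> lam"
    unfolding quad_form_scale by (simp add: power_divide)
  then show ?thesis using r by (metis pos_divide_le_eq zero_less_power mult.commute)
qed

lemma linear_coeff_eq_0_if_nonpos:
  fixes a b :: real
  assumes "\<And>t. a * t + b * t\<^sup>2 \<le> 0"
  shows "a = 0"
proof (rule ccontr)
  assume "a \<noteq> 0"
  define t where "t = a / (\<bar>b\<bar> + 1)"
  have "t \<noteq> 0" "a = t * (\<bar>b\<bar> + 1)"
    using \<open>a \<noteq> 0\<close> by (auto simp: t_def add_nonneg_eq_0_iff)
  then have "a * t + b * t\<^sup>2 = t\<^sup>2 * (\<bar>b\<bar> + b + 1)"
    by (simp add: power2_eq_square algebra_simps)
  also have "\<dots> > 0" using \<open>t \<noteq> 0\<close> by (intro mult_pos_pos) auto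
  finally show False using assms[of t] by simp
qed

lemma rayleigh_maximiser_is_eigenvector:
  assumes fin: "finite V" and sym: "\<And>u v. M u v = M v u"
    and bound: "\<And>x. quad_form V M x \<le> lam * sq_norm_on V x"
    and attained: "quad_form V M x0 = lam * sq_norm_on V x0"
  shows "\<forall>u\<in>V. (\<Sum>v\<in>V. M u v * x0 v) = lam * x0 u"
proof -
  define w where "w u = (\<Sum>v\<in>V. M u v * x0 v) - lam * x0 u" for u
  have first_variation:
    "(\<Sum>u\<in>V. \<Sum>v\<in>V. M u v * x0 u * w v) - lam * (\<Sum>v\<in>V. x0 v * w v) = sq_norm_on V w"
  proof -
    have "(\<Sum>u\<in>V. \<Sum>v\<in>V. M u v * x0 u * w v) = (\<Sum>v\<in>V. w v * (\<Sum>u\<in>V. M v u * x0 u))"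
      by (subst sum.swap) (simp add: sum_distrib_left sym algebra_simps)
    then have "(\<Sum>u\<in>V. \<Sum>v\<in>V. M u v * x0 u * w v) - lam * (\<Sum>v\<in>V. x0 v * w v)
        = (\<Sum>v\<in>V. w v * ((\<Sum>u\<in>V. M v u * x0 u) - lam * x0 v))"
      by (simp add: sum_distrib_left right_diff_distrib sum_subtractf algebra_simps)
    also have "\<dots> = sq_norm_on V w" unfolding sq_norm_on_def w_def by (simp add: power2_eq_square)
    finally show ?thesis .
  qed
  \<comment> \<open>Moving from x0 along w = M x0 - lam x0 violates the bound at first order unless w = 0.\<close>
  have "sq_norm_on V w * (2 * t) + (quad_form V M w - lam * sq_norm_on V w) * t\<^sup>2 \<le> 0" for t
    using bound[of "\<lambda>v. x0 v + t * w v"] attained first_variation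
    unfolding quad_form_add_scaled[OF sym] sq_norm_on_add_scaled
    by (simp add: algebra_simps)
  then have "2 * sq_norm_on V w = 0"
    by (intro linear_coeff_eq_0_if_nonpos[where b = "quad_form V M w - lam * sq_norm_on V w"])
      (metis mult.assoc mult.commute)
  then show ?thesis using fin by (simp add: sq_norm_on_eq_0_iff w_def)
qed

lemma symmetric_rayleigh_eigenvalue:
  assumes fin: "finite V" and ne: "V \<noteq> {}" and sym: "\<And>u v. M u v = M v u"
  shows "\<exists>lam. is_eigenvalue_on V M lam \<and> (\<forall>x. quad_form V M x \<le> lam * sq_norm_on V x)"
proof -
  obtain x0 where x0: "sq_norm_on V x0 = 1"
    and max: "\<And>x. sq_norm_on V x = 1 \<Longrightarrow> quad_form V M x \<le> quad_form V M x0"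
    using quad_form_attains_max_on_unit_sphere[OF fin ne] by blast
  have bound: "quad_form V M x \<le> quad_form V M x0 * sq_norm_on V x" for x
    using rayleigh_bound_of_unit_sphere_bound[OF fin max] .
  have "\<exists>v\<in>V. x0 v \<noteq> 0" using x0 fin sq_norm_on_eq_0_iff[of V x0] by auto
  moreover have "\<forall>u\<in>V. (\<Sum>v\<in>V. M u v * x0 v) = quad_form V M x0 * x0 u"
    using rayleigh_maximiser_is_eigenvector[OF fin sym bound] x0 by simp
  ultimately show ?thesis using bound unfolding is_eigenvalue_on_def by blast
qed

lemma is_eigenvalue_on_imp_eigenvalue:
  assumes f: "bij_betw f {0..<n} V" and ev: "is_eigenvalue_on V M mu"
  shows "eigenvalue (mat n n (\<lambda>(i, j). M (f i) (f j))) mu"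
proof -
  define A :: "real mat" where "A = mat n n (\<lambda>(i, j). M (f i) (f j))"
  obtain x v0 where v0: "v0 \<in> V" "x v0 \<noteq> 0"
    and x: "\<forall>u\<in>V. (\<Sum>v\<in>V. M u v * x v) = mu * x u"
    using ev unfolding is_eigenvalue_on_def by blast
  define y where "y = vec n (\<lambda>i. x (f i))"
  obtain i0 where "i0 < n" "f i0 = v0"
    using f v0 unfolding bij_betw_def by (metis atLeastLessThan_iff imageE)
  then have "y \<noteq> 0\<^sub>v n" using v0 by (metis index_vec index_zero_vec(1) y_def)
  moreover have "A *\<^sub>v y = mu \<cdot>\<^sub>v y"
  proof (rule eq_vecI)
    fix i assume "i < dim_vec (mu \<cdot>\<^sub>v y)"
    then have i: "i < n" by (simp add: y_def)
    then have "f i \<in> V" using f unfolding bij_betw_def by auto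
    have "(A *\<^sub>v y) $ i = (\<Sum>j\<in>{0..<n}. M (f i) (f j) * x (f j))"
      using i by (simp add: A_def y_def scalar_prod_def)
    also have "\<dots> = (\<Sum>v\<in>V. M (f i) v * x v)"
      using sum.reindex_bij_betw[OF f] .
    also have "\<dots> = mu * x (f i)" using x \<open>f i \<in> V\<close> by blast
    finally show "(A *\<^sub>v y) $ i = (mu \<cdot>\<^sub>v y) $ i" using i by (simp add: y_def)
  qed (simp add: A_def y_def)
  ultimately have "eigenvector A y mu" unfolding eigenvector_def by (simp add: A_def y_def)
  then show ?thesis unfolding eigenvalue_def A_def by blast
qed

lemma finite_eigenvalues_on:
  assumes "finite V"
  shows "finite {mu. is_eigenvalue_on V M mu}"
proof -
  obtain f where f: "bij_betw f {0..<card V} V" using ex_bij_betw_nat_finite[OF assms] by blast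
  define A :: "real mat" where "A = mat (card V) (card V) (\<lambda>(i, j). M (f i) (f j))"
  have A: "A \<in> carrier_mat (card V) (card V)" by (simp add: A_def)
  have "{mu. is_eigenvalue_on V M mu} \<subseteq> {mu. poly (char_poly A) mu = 0}"
    using is_eigenvalue_on_imp_eigenvalue[OF f] eigenvalue_root_char_poly[OF A]
    by (auto simp: A_def)
  moreover have "char_poly A \<noteq> 0" using degree_monic_char_poly[OF A] by auto
  ultimately show ?thesis using poly_roots_finite finite_subset by blast
qed

lemma quad_form_unit_diff:
  assumes fin: "finite V" and "u \<in> V" "v \<in> V" "u \<noteq> v"
  shows "quad_form V M (\<lambda>w. (if w = u then 1 else 0) - (if w = v then 1 else 0))
    = M u u - M u v - M v u + M v v"
proof -
  define e :: "'a \<Rightarrow> real" where "e w = (if w = u then 1 else 0) - (if w = v then 1 else 0)" for w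
  have pair: "(\<Sum>w\<in>V. f w * e w) = f u - f v" for f :: "'a \<Rightarrow> real"
  proof -
    have "(\<Sum>w\<in>V. f w * e w) = (\<Sum>w\<in>V. (if w = u then f w else 0) - (if w = v then f w else 0))"
      by (intro sum.cong) (auto simp: e_def)
    then show ?thesis using fin assms by (simp add: sum_subtractf)
  qed
  have "quad_form V M e = (\<Sum>a\<in>V. e a * (M a u - M a v))"
    unfolding quad_form_eq_sum_apply pair ..
  also have "\<dots> = M u u - M u v - M v u + M v v"
    using pair[of "\<lambda>a. M a u - M a v"] by (simp add: mult.commute)
  finally show ?thesis by (simp add: e_def[abs_def])
qed

lemma laplacian_symmetric:
  assumes "simple_graph V E"
  shows "laplacian V E u v = laplacian V E v u"
  using assms unfolding simple_graph_def laplacian_def by (cases "u = v") auto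

lemma laplacian_spectral_radius_rayleigh:
  assumes g: "simple_graph V E" and ne: "V \<noteq> {}"
  shows "is_eigenvalue_on V (laplacian V E) (laplacian_spectral_radius V E)"
    and "quad_form V (laplacian V E) x \<le> laplacian_spectral_radius V E * sq_norm_on V x"
proof -
  have fin: "finite V" using g by (simp add: simple_graph_def)
  obtain lam where lam: "is_eigenvalue_on V (laplacian V E) lam"
    and bound: "\<And>x. quad_form V (laplacian V E) x \<le> lam * sq_norm_on V x"
    using symmetric_rayleigh_eigenvalue[OF fin ne, of "laplacian V E"] laplacian_symmetric[OF g] by blast
  let ?spec = "{mu. is_eigenvalue_on V (laplacian V E) mu}"
  have spec: "finite ?spec" "?spec \<noteq> {}" using finite_eigenvalues_on[OF fin] lam by auto
  show "is_eigenvalue_on V (laplacian V E) (laplacian_spectral_radius V E)"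
    unfolding laplacian_spectral_radius_def using Max_in[OF spec] by simp
  have "lam \<le> laplacian_spectral_radius V E"
    unfolding laplacian_spectral_radius_def using spec(1) lam by simp
  then show "quad_form V (laplacian V E) x \<le> laplacian_spectral_radius V E * sq_norm_on V x"
    using bound[of x] mult_right_mono[OF _ sq_norm_on_nonneg[of V x]] by (meson order_trans)
qed

lemma laplacian_spectral_radius_edgeless:
  assumes g: "simple_graph V E" and ne: "V \<noteq> {}" and edgeless: "\<forall>u v. \<not> E u v"
  shows "laplacian_spectral_radius V E = 0"
proof -
  have "laplacian V E u v = 0" for u v
    using edgeless unfolding laplacian_def Defs.degree_def nbhd_in_def by auto
  then show ?thesis
    using laplacian_spectral_radius_rayleigh(1)[OF g ne] unfolding is_eigenvalue_on_def by auto
qed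

lemma nbhd_in_Un_Diff:
  assumes "S \<subseteq> V"
  shows "nbhd_in E V u = nbhd_in E S u \<union> nbhd_in E (V - S) u"
    and "nbhd_in E S u \<inter> nbhd_in E (V - S) u = {}"
  using assms unfolding nbhd_in_def by auto

lemma degree_eq_card_nbhd_in_add:
  assumes g: "simple_graph V E" and SV: "S \<subseteq> V"
  shows "Defs.degree V E v = card (nbhd_in E S v) + card (nbhd_in E (V - S) v)"
proof -
  have "finite V" using g by (simp add: simple_graph_def)
  then have "finite (nbhd_in E S v)" "finite (nbhd_in E (V - S) v)"
    using SV unfolding nbhd_in_def by (auto intro: rev_finite_subset)
  then show ?thesis
    unfolding Defs.degree_def nbhd_in_Un_Diff(1)[OF SV]
    by (simp add: card_Un_disjoint nbhd_in_Un_Diff(2)[OF SV])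
qed

lemma min_degree_le_degree:
  assumes "simple_graph V E" and "v \<in> V"
  shows "min_degree V E \<le> Defs.degree V E v"
  using assms unfolding min_degree_def simple_graph_def by (intro Min_le) auto

lemma sum_card_nbhd_in_swap:
  assumes sym: "\<And>u v. E u v \<Longrightarrow> E v u" and "finite A" "finite B"
  shows "(\<Sum>u\<in>A. card (nbhd_in E B u)) = (\<Sum>v\<in>B. card (nbhd_in E A v))"
proof -
  have card_eq: "card (nbhd_in E C u) = (\<Sum>v\<in>C. if E v u then 1 else 0)" if "finite C" for C u
    using sum.inter_filter[OF that, of "\<lambda>_. 1::nat" "\<lambda>v. E v u"] by (simp add: nbhd_in_def)
  have "(\<Sum>u\<in>A. \<Sum>v\<in>B. if E v u then 1 else 0) = (\<Sum>v\<in>B. \<Sum>u\<in>A. if E v u then 1 else (0::nat))"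
    by (rule sum.swap)
  also have "\<dots> = (\<Sum>v\<in>B. \<Sum>u\<in>A. if E u v then 1 else 0)"
    by (intro sum.cong refl) (metis sym)
  finally show ?thesis using assms by (simp add: card_eq)
qed

lemma laplacian_apply:
  assumes g: "simple_graph V E" and u: "u \<in> V"
  shows "(\<Sum>w\<in>V. laplacian V E u w * x w)
    = real (Defs.degree V E u) * x u - (\<Sum>w\<in>nbhd_in E V u. x w)"
proof -
  have fin: "finite V" using g by (simp add: simple_graph_def)
  have "(\<Sum>w\<in>V. laplacian V E u w * x w)
      = (\<Sum>w\<in>V. (if w = u then real (Defs.degree V E u) * x w else 0) - (if E w u then x w else 0))"
    using g unfolding simple_graph_def laplacian_def by (intro sum.cong refl) auto
  also have "\<dots> = real (Defs.degree V E u) * x u - (\<Sum>w\<in>V. if E w u then x w else 0)"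
    using fin u by (simp add: sum_subtractf)
  also have "(\<Sum>w\<in>V. if E w u then x w else 0) = (\<Sum>w\<in>nbhd_in E V u. x w)"
    unfolding nbhd_in_def using fin by (simp add: sum.inter_filter)
  finally show ?thesis .
qed

lemma laplacian_apply_two_valued:
  assumes g: "simple_graph V E" and SV: "S \<subseteq> V" and u: "u \<in> V"
  shows "(\<Sum>w\<in>V. laplacian V E u w * (if w \<in> S then a else b))
    = (a - b) * (if u \<in> S then real (card (nbhd_in E (V - S) u)) else - real (card (nbhd_in E S u)))"
proof -
  have fin: "finite V" using g by (simp add: simple_graph_def)
  then have "finite (nbhd_in E S u)" "finite (nbhd_in E (V - S) u)"
    using SV unfolding nbhd_in_def by (auto intro: rev_finite_subset)
  moreover have "(\<Sum>w\<in>nbhd_in E S u. if w \<in> S then a else b) = real (card (nbhd_in E S u)) * a"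
    and "(\<Sum>w\<in>nbhd_in E (V - S) u. if w \<in> S then a else b) = real (card (nbhd_in E (V - S) u)) * b"
    by (simp_all add: nbhd_in_def)
  ultimately have "(\<Sum>w\<in>nbhd_in E V u. if w \<in> S then a else b)
      = real (card (nbhd_in E S u)) * a + real (card (nbhd_in E (V - S) u)) * b"
    unfolding nbhd_in_Un_Diff(1)[OF SV] by (simp add: sum.union_disjoint nbhd_in_Un_Diff(2)[OF SV])
  then show ?thesis
    using laplacian_apply[OF g u, of "\<lambda>w. if w \<in> S then a else b"] degree_eq_card_nbhd_in_add[OF g SV, of u]
    by (cases "u \<in> S") (simp_all add: algebra_simps)
qed

lemma sq_norm_on_two_valued:
  assumes "finite V" and "S \<subseteq> V"
  shows "sq_norm_on V (\<lambda>w. if w \<in> S then a else b) = real (card S) * a\<^sup>2 + real (card (V - S)) * b\<^sup>2"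
proof -
  have "V \<inter> S = S" "V \<inter> - S = V - S" using assms(2) by auto
  then show ?thesis
    unfolding sq_norm_on_def using assms(1) by (simp add: if_distrib[of "\<lambda>y. y\<^sup>2"] sum.If_cases)
qed

lemma laplacian_quad_form_two_valued:
  assumes g: "simple_graph V E" and SV: "S \<subseteq> V"
  shows "quad_form V (laplacian V E) (\<lambda>w. if w \<in> S then a else b)
    = (a - b)\<^sup>2 * (\<Sum>v\<in>V - S. real (card (nbhd_in E S v)))"
proof -
  have fin: "finite V" using g by (simp add: simple_graph_def)
  have finS: "finite S" using finite_subset[OF SV fin] .
  have cut_sym: "(\<Sum>u\<in>S. real (card (nbhd_in E (V - S) u))) = (\<Sum>v\<in>V - S. real (card (nbhd_in E S v)))"
    using sum_card_nbhd_in_swap[of E S "V - S"] g fin finS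
    unfolding simple_graph_def by (simp flip: of_nat_sum)
  have "quad_form V (laplacian V E) (\<lambda>w. if w \<in> S then a else b)
      = (\<Sum>u\<in>V. (a - b) * (if u \<in> S then a * real (card (nbhd_in E (V - S) u))
                            else - b * real (card (nbhd_in E S u))))"
    unfolding quad_form_eq_sum_apply
    by (intro sum.cong refl) (simp add: laplacian_apply_two_valued[OF g SV])
  also have "\<dots> = (a - b) * (a * (\<Sum>u\<in>S. real (card (nbhd_in E (V - S) u)))
                          - b * (\<Sum>v\<in>V - S. real (card (nbhd_in E S v))))"
  proof -
    have "V \<inter> S = S" "V \<inter> - S = V - S" using SV by auto
    then show ?thesis
      using fin by (simp add: sum.If_cases sum_negf flip: sum_distrib_left)
  qed
  finally show ?thesis unfolding cut_sym by (simp add: power2_eq_square algebra_simps)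
qed

lemma laplacian_cut_bound:
  assumes g: "simple_graph V E" and SV: "S \<subseteq> V"
    and bound: "\<And>x. quad_form V (laplacian V E) x \<le> mu * sq_norm_on V x"
  shows "real (card V) * (\<Sum>v\<in>V - S. real (card (nbhd_in E S v)))
    \<le> mu * real (card S) * real (card (V - S))"
proof -
  have fin: "finite V" using g by (simp add: simple_graph_def)
  define s t n where "s = real (card S)" and "t = real (card (V - S))" and "n = real (card V)"
  define cut where "cut = (\<Sum>v\<in>V - S. real (card (nbhd_in E S v)))"
  have n: "n = s + t"
    unfolding s_def t_def n_def using card_Diff_subset[OF finite_subset[OF SV fin] SV] card_mono[OF fin SV]
    by simp
  have "n\<^sup>2 * cut \<le> mu * (s * t\<^sup>2 + t * s\<^sup>2)"
    using bound[of "\<lambda>w. if w \<in> S then t else - s"]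
    unfolding laplacian_quad_form_two_valued[OF g SV] sq_norm_on_two_valued[OF fin SV]
    by (simp add: n cut_def s_def t_def add.commute)
  then have "n * (n * cut) \<le> n * (mu * s * t)"
    by (simp add: n power2_eq_square algebra_simps)
  moreover have "n > 0" if "V \<noteq> {}" using that fin by (simp add: n_def card_gt_0_iff)
  ultimately have "n * cut \<le> mu * s * t" if "V \<noteq> {}"
    using that by (simp add: mult_le_cancel_left_pos)
  then show ?thesis using SV by (cases "V = {}") (simp_all add: n_def s_def t_def cut_def)
qed

lemma laplacian_edge_bound:
  assumes g: "simple_graph V E" and uv: "E u v"
    and bound: "\<And>x. quad_form V (laplacian V E) x \<le> mu * sq_norm_on V x"
  shows "real (Defs.degree V E u + Defs.degree V E v) + 2 \<le> 2 * mu"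
proof -
  have fin: "finite V" and u: "u \<in> V" and v: "v \<in> V" and ne: "u \<noteq> v" and vu: "E v u"
    using g uv unfolding simple_graph_def by metis+
  define e :: "'a \<Rightarrow> real" where "e w = (if w = u then 1 else 0) - (if w = v then 1 else 0)" for w
  have "quad_form V (laplacian V E) e = real (Defs.degree V E u + Defs.degree V E v) + 2"
    using quad_form_unit_diff[OF fin u v ne, of "laplacian V E"] uv vu ne
    unfolding e_def[abs_def] by (simp add: laplacian_def)
  moreover have "sq_norm_on V e = 2"
  proof -
    have "sq_norm_on V e = (\<Sum>w\<in>V. (if w = u then 1 else 0) + (if w = v then 1 else 0))"
      unfolding sq_norm_on_def by (intro sum.cong refl) (auto simp: e_def ne)
    then show ?thesis using fin u v by (simp add: sum.distrib)
  qed
  ultimately show ?thesis using bound[of e] by simp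
qed

lemma ceiling_half_le_card_nbhd_in:
  assumes g: "simple_graph V E" and SV: "S \<subseteq> V" and v: "v \<in> V - S"
    and surplus: "card (nbhd_in E (V - S) v) + k \<le> card (nbhd_in E S v)"
  shows "\<lceil>real (min_degree V E + k) / 2\<rceil> \<le> int (card (nbhd_in E S v))"
proof -
  have "min_degree V E \<le> card (nbhd_in E S v) + card (nbhd_in E (V - S) v)"
    using min_degree_le_degree[OF g] degree_eq_card_nbhd_in_add[OF g SV] v by fastforce
  then have "real (min_degree V E + k) / 2 \<le> real (card (nbhd_in E S v))"
    using surplus by simp
  then show ?thesis by (simp add: ceiling_le_iff)
qed

lemma laplacian_spectral_radius_card_bound:
  assumes g: "simple_graph V E" and ne: "V \<noteq> {}" and SV: "S \<subseteq> V"
    and pos: "0 < laplacian_spectral_radius V E"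
    and c_le: "\<And>v. v \<in> V - S \<Longrightarrow> c \<le> real (card (nbhd_in E S v))"
    and c_le_min_degree: "c \<le> real (min_degree V E) + 1"
  shows "real (card V) * c \<le> laplacian_spectral_radius V E * real (card S)"
proof -
  define mu where "mu = laplacian_spectral_radius V E"
  have bound: "\<And>x. quad_form V (laplacian V E) x \<le> mu * sq_norm_on V x"
    unfolding mu_def by (rule laplacian_spectral_radius_rayleigh(2)[OF g ne])
  show ?thesis
  proof (cases "S = V")
    case True
    have "\<not> (\<forall>u v. \<not> E u v)"
      using laplacian_spectral_radius_edgeless[OF g ne] pos by auto
    then obtain u v where uv: "E u v" by blast
    then have "u \<in> V" "v \<in> V" using g unfolding simple_graph_def by blast+
    then have "real (min_degree V E) \<le> real (Defs.degree V E u)"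
      and "real (min_degree V E) \<le> real (Defs.degree V E v)"
      using min_degree_le_degree[OF g] by simp_all
    then have "c \<le> mu"
      using laplacian_edge_bound[OF g uv bound] c_le_min_degree by simp
    then show ?thesis using True unfolding mu_def by (simp add: mult.commute mult_right_mono)
  next
    case False
    then have t_pos: "0 < real (card (V - S))"
      using SV g by (simp add: card_gt_0_iff simple_graph_def)
    have "real (card (V - S)) * c \<le> (\<Sum>v\<in>V - S. real (card (nbhd_in E S v)))"
      using sum_mono[of "V - S" "\<lambda>_. c", OF c_le] by simp
    then have "real (card V) * (real (card (V - S)) * c) \<le> mu * real (card S) * real (card (V - S))"
      using laplacian_cut_bound[OF g SV bound] mult_left_mono[OF _ of_nat_0_le_iff]
      by (meson order_trans)
    then have "real (card (V - S)) * (real (card V) * c) \<le> real (card (V - S)) * (mu * real (card S))"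
      by (simp add: algebra_simps)
    then show ?thesis using t_pos unfolding mu_def by (simp add: mult_le_cancel_left_pos)
  qed
qed

lemma alliance_card_lower_bound:
  assumes g: "simple_graph V E" and ne: "V \<noteq> {}" and SV: "S \<subseteq> V" and k: "k \<le> 2"
    and surplus: "\<forall>v\<in>V - S. card (nbhd_in E (V - S) v) + k \<le> card (nbhd_in E S v)"
  shows "\<lceil>real (card V) / laplacian_spectral_radius V E * \<lceil>real (min_degree V E + k) / 2\<rceil>\<rceil>
    \<le> int (card S)"
proof -
  define mu where "mu = laplacian_spectral_radius V E"
  define c where "c = \<lceil>real (min_degree V E + k) / 2\<rceil>"
  have "real (card V) / mu * real_of_int c \<le> real (card S)"
  proof (cases "mu \<le> 0")
    case True
    \<comment> \<open>This covers edgeless graphs, where mu = 0 and the division by zero makes the bound 0.\<close>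
    have "0 \<le> c" unfolding c_def by simp
    with True have "real (card V) / mu * real_of_int c \<le> 0"
      by (simp add: divide_nonneg_nonpos mult_nonpos_nonneg)
    then show ?thesis by (meson of_nat_0_le_iff order_trans)
  next
    case False
    have "c \<le> int (min_degree V E) + 1"
      unfolding c_def using k by (simp add: ceiling_le_iff)
    moreover have "c \<le> int (card (nbhd_in E S v))" if "v \<in> V - S" for v
      using ceiling_half_le_card_nbhd_in[OF g SV that] surplus that unfolding c_def by blast
    ultimately have "real (card V) * real_of_int c \<le> mu * real (card S)"
      using laplacian_spectral_radius_card_bound[OF g ne SV] False unfolding mu_def
      by (metis of_int_le_iff of_int_of_nat_eq of_int_add of_int_1 not_le)
    then show ?thesis using False by (simp add: pos_divide_le_eq mult.commute)
  qed
  then show ?thesis unfolding mu_def c_def by (simp add: ceiling_le_iff)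
qed

lemma le_Min_card_of_subsets:
  fixes z :: int
  assumes "finite V" and "\<And>S. P S \<Longrightarrow> S \<subseteq> V" and "P W"
    and "\<And>S. P S \<Longrightarrow> z \<le> int (card S)"
  shows "z \<le> int (Min (card ` {S. P S}))"
proof -
  have "finite {S. P S}" using assms(1,2) by (metis Pow_iff finite_Pow_iff rev_finite_subset mem_Collect_eq subsetI)
  then have "Min (card ` {S. P S}) \<in> card ` {S. P S}" using assms(3) by (intro Min_in) auto
  then show ?thesis using assms(4) by auto
qed

theorem theorem6:
  fixes V :: "'a set" and E :: "'a \<Rightarrow> 'a \<Rightarrow> bool"
  assumes "simple_graph V E" and "V \<noteq> {}"
  shows "real (offensive_alliance_number V E) \<ge>
           real_of_int \<lceil>real (card V) / laplacian_spectral_radius V E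
              * real_of_int \<lceil>real (min_degree V E + 1) / 2\<rceil>\<rceil>
         \<and> real (strong_offensive_alliance_number V E) \<ge>
           real_of_int \<lceil>real (card V) / laplacian_spectral_radius V E
              * (real_of_int \<lceil>real (min_degree V E) / 2\<rceil> + 1)\<rceil>"
proof -
  let ?n = "real (card V)" and ?mu = "laplacian_spectral_radius V E" and ?d = "min_degree V E"
  have fin: "finite V" using assms(1) by (simp add: simple_graph_def)
  have "\<lceil>?n / ?mu * \<lceil>real (?d + 1) / 2\<rceil>\<rceil> \<le> int (offensive_alliance_number V E)"
    unfolding offensive_alliance_number_def
    using fin assms alliance_card_lower_bound[OF assms, where k = 1]
    by (intro le_Min_card_of_subsets[where W = V]) (auto simp: global_offensive_alliance_def)
  moreover have "\<lceil>?n / ?mu * \<lceil>real (?d + 2) / 2\<rceil>\<rceil> \<le> int (strong_offensive_alliance_number V E)"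
    unfolding strong_offensive_alliance_number_def
    using fin assms alliance_card_lower_bound[OF assms, where k = 2]
    by (intro le_Min_card_of_subsets[where W = V]) (auto simp: global_strong_offensive_alliance_def)
  moreover have "\<lceil>real (?d + 2) / 2\<rceil> = \<lceil>real ?d / 2\<rceil> + 1"
  proof -
    have "real (?d + 2) / 2 = real ?d / 2 + 1" by (simp add: field_simps)
    then show ?thesis by (simp only: ceiling_add_one)
  qed
  ultimately show ?thesis by simp
qed

end
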